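(* Assume (S). There is a constant $c_0>0$ depending only on $m$, $L$ and $\sigma_{max}:=1+\max_{\bar D\times[-H-1,-H]}\sigma$ such that for every $u\in\bar S_0$ and every $\delta\in(0,1)$, $$\int_{\Omega_\delta(u)}\sigma_\delta|\nabla h_{u,\delta}|^2\,d(x,z)\le c_0\big(1+\|u\|_{L_2(D)}^2+\|\partial_xu\|_{L_2(D)}^2\big).$$
   Context: Standing setting (S): $L>0$, $D=(-L,L)$, $H>0$, $\mathcal R_\delta=D\times(-H-\delta,-H)$; for $u:\bar D\to[-H,\infty)$, $\Omega(u)=\{(x,z): x\in D,\ -H<z<u(x)\}$, $\Omega_\delta(u)=\{(x,z): x\in D,\ -H-\delta<z<u(x)\}$. $\bar S_0=\{u\in H^2(D): u(\pm L)=\partial_xu(\pm L)=0,\ u\ge -H\}$. $\sigma\in C^2(\bar D\times[-H-1,-H])$, $\sigma>0$; $\sigma_\delta=\delta\sigma$ on $\mathcal R_\delta$, $\sigma_\delta=1$ on $D\times(-H,\infty)$. $h_b\in C^2(\bar D\times[-H-1,-H]\times[-H,\infty))$, $h\in C^2(\bar D\times[-H,\infty)\times[-H,\infty))$ with $h_b(x,-H,w)=h(x,-H,w)$, $\sigma(x,-H)\partial_zh_b(x,-H,w)=\partial_zh(x,-H,w)$, $\partial_wh_b(x,-H-1,w)=0$, and for some $m>0$: $|\partial_xh_b|+|\partial_zh_b|\le\sqrt{m(1+w^2)}$, $|\partial_wh_b|\le\sqrt m$; $|\partial_xh|+|\partial_zh|\le\sqrt{m(1+w^2)/(H+w)}$,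 $|\partial_wh|\le\sqrt{m/(H+w)}$; and for some $K>0$: $|\partial_xh(x,w,w)|+|\partial_zh(x,w,w)+\partial_wh(x,w,w)|\le K$. $h_\delta(x,z,w)=h_b(x,-H+(z+H)/\delta,w)$ for $z\in[-H-\delta,-H)$, $=h(x,z,w)$ for $z\ge-H$; $h_{u,\delta}(x,z)=h_\delta(x,z,u(x))$. *)

theory Defs
  imports "HOL-Analysis.Analysis"
begin

definition pd :: "('a::euclidean_space \<Rightarrow> real) \<Rightarrow> 'a \<Rightarrow> 'a \<Rightarrow> real" where
  "pd f v p = deriv (\<lambda>t. f (p + t *\<^sub>R v)) 0"

definition C2_on :: "'a::euclidean_space set \<Rightarrow> ('a \<Rightarrow> real) \<Rightarrow> bool" where
  "C2_on S f \<longleftrightarrow> (\<exists>U. open U \<and> S \<subseteq> U \<and>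
     (\<forall>v\<in>Basis.
        (\<forall>p\<in>U. (\<lambda>t. f (p + t *\<^sub>R v)) differentiable (at 0)) \<and>
        continuous_on U (pd f v) \<and>
        (\<forall>w\<in>Basis.
           (\<forall>p\<in>U. (\<lambda>t. pd f v (p + t *\<^sub>R w)) differentiable (at 0)) \<and>
           continuous_on U (pd (pd f v) w))))"

(* H^2(a,b), via its standard characterization on a bounded interval:
   u is C^1 on [a,b] with derivative u', and u' is absolutely continuous with u'' = g in L^2(a,b). *)
definition S0bar :: "real \<Rightarrow> real \<Rightarrow> (real \<Rightarrow> real) \<Rightarrow> bool" where
  "S0bar L H u \<longleftrightarrow> (\<exists>u' g.
      (\<forall>x\<in>{-L..L}. (u has_real_derivative u' x) (at x within {-L..L})) \<and>
      g \<in> borel_measurable lborel \<and>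
      set_integrable lborel {-L..L} (\<lambda>x. (g x)\<^sup>2) \<and>
      (\<forall>x\<in>{-L..L}. u' x = u' (-L) + (LBINT t=-L..x. g t)) \<and>
      u (-L) = 0 \<and> u L = 0 \<and> u' (-L) = 0 \<and> u' L = 0 \<and>
      (\<forall>x\<in>{-L..L}. u x \<ge> -H))"

definition Omega_delta :: "real \<Rightarrow> real \<Rightarrow> real \<Rightarrow> (real \<Rightarrow> real) \<Rightarrow> (real \<times> real) set" where
  "Omega_delta L H \<delta> u = {(x, z). -L < x \<and> x < L \<and> -H - \<delta> < z \<and> z < u x}"

definition sigma_delta :: "real \<Rightarrow> real \<Rightarrow> (real \<times> real \<Rightarrow> real) \<Rightarrow> real \<times> real \<Rightarrow> real" where
  "sigma_delta H \<delta> \<sigma> p = (if snd p < -H then \<delta> * \<sigma> p else 1)"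

definition h_delta :: "real \<Rightarrow> real \<Rightarrow> (real \<times> real \<times> real \<Rightarrow> real) \<Rightarrow> (real \<times> real \<times> real \<Rightarrow> real)
    \<Rightarrow> real \<Rightarrow> real \<Rightarrow> real \<Rightarrow> real" where
  "h_delta H \<delta> hb h x z w = (if z < -H then hb (x, -H + (z + H) / \<delta>, w) else h (x, z, w))"

definition grad_sq :: "((real \<times> real) \<Rightarrow> real) \<Rightarrow> real \<times> real \<Rightarrow> real" where
  "grad_sq F p = (frechet_derivative F (at p) (1, 0))\<^sup>2 + (frechet_derivative F (at p) (0, 1))\<^sup>2"

end

theory Submission
  imports Defs
begin

(* Above the interface z = -H the integrand is (h_x + u' h_w)^2 + h_z^2, which the growth
   conditions bound by 2m(1 + u^2 + u'^2)/(H + u); the vertical fibre {-H < z < u(x)} has length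
   exactly H + u(x), so the weight cancels. In the layer -H-delta < z < -H the rescaling
   z |-> -H + (z+H)/delta multiplies the z-derivative by 1/delta, so the integrand is at most
   2m sigma (1 + u^2 + u'^2)/delta, and the layer has width delta. Every fibre therefore contributes
   at most 4m(1 + max sigma)(1 + u^2 + u'^2), and integrating over x gives the estimate. *)

lemma has_derivative_pair_partials:
  fixes f :: "'a::real_normed_vector \<times> 'b::real_normed_vector \<Rightarrow> 'c::real_normed_vector"
  assumes V: "open V" "(x0, y0) \<in> V"
    and fx: "((\<lambda>x. f (x, y0)) has_derivative A) (at x0)"
    and fy: "\<And>x y. (x, y) \<in> V \<Longrightarrow> ((\<lambda>y. f (x, y)) has_derivative blinfun_apply (B (x, y))) (at y)"
    and B: "continuous_on V B"
  shows "(f has_derivative (\<lambda>(a, b). A a + B (x0, y0) b)) (at (x0, y0))"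
proof -
  obtain X Y' where XY': "open X" "open Y'" "(x0, y0) \<in> X \<times> Y'" "X \<times> Y' \<subseteq> V"
    using open_prod_elim[OF V] by blast
  obtain e where e: "e > 0" "ball y0 e \<subseteq> Y'"
    using XY' openE by blast
  define Y where "Y = ball y0 e"
  have sub: "X \<times> Y \<subseteq> V" using XY' e by (auto simp: Y_def)
  have in_XY: "(x0, y0) \<in> X \<times> Y" using XY' e by (simp add: Y_def)
  have open_XY: "open (X \<times> Y)" using XY' by (simp add: Y_def open_Times)
  have "((\<lambda>(x, y). f (x, y)) has_derivative (\<lambda>(a, b). A a + B (x0, y0) b)) (at (x0, y0) within X \<times> Y)"
  proof (rule has_derivative_partialsI)
    show "((\<lambda>x. f (x, y0)) has_derivative A) (at x0 within X)"
      using fx by (rule has_derivative_at_withinI)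
    show "((\<lambda>y. f (x, y)) has_derivative blinfun_apply (B (x, y))) (at y within Y)"
      if "x \<in> X" "y \<in> Y" for x y
      using fy[of x y] sub that by (auto intro: has_derivative_at_withinI)
    show "continuous (at (x0, y0) within X \<times> Y) (\<lambda>(x, y). B (x, y))"
      using B V continuous_on_eq_continuous_at continuous_at_imp_continuous_at_within
      by (fastforce simp: case_prod_beta')
  qed (use e in \<open>auto simp: Y_def\<close>)
  then show ?thesis
    using at_within_open[OF in_XY open_XY] by (simp add: case_prod_beta')
qed

lemma has_real_derivative_pd:
  fixes f :: "'a::euclidean_space \<Rightarrow> real"
  assumes "(\<lambda>t. f (p + t *\<^sub>R v)) differentiable (at 0)"
  shows "((\<lambda>s. f (p + (s - a) *\<^sub>R v)) has_real_derivative pd f v p) (at a)"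
proof -
  have "((\<lambda>t. f (p + t *\<^sub>R v)) has_real_derivative pd f v p) (at ((\<lambda>s. s - a) a))"
    using assms unfolding pd_def by (simp add: DERIV_deriv_iff_real_differentiable)
  moreover have "((\<lambda>s. s - a) has_real_derivative 1) (at a)"
    by (auto intro!: derivative_eq_intros)
  ultimately show ?thesis
    using DERIV_chain by (fastforce simp: o_def)
qed

lemma has_derivative_from_partials2:
  fixes f :: "real \<times> real \<Rightarrow> real"
  assumes V: "open V" "(z0, w0) \<in> V"
    and dz: "((\<lambda>z. f (z, w0)) has_real_derivative P) (at z0)"
    and dw: "\<And>z w. (z, w) \<in> V \<Longrightarrow> ((\<lambda>w. f (z, w)) has_real_derivative Q (z, w)) (at w)"
    and Q: "continuous_on V Q"
  shows "(f has_derivative (\<lambda>(a, b). a * P + b * Q (z0, w0))) (at (z0, w0))"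
proof -
  have "(f has_derivative (\<lambda>(a, b). a * P + blinfun_mult_left (Q (z0, w0)) b)) (at (z0, w0))"
  proof (rule has_derivative_pair_partials[OF V])
    show "((\<lambda>z. f (z, w0)) has_derivative (\<lambda>a. a * P)) (at z0)"
      using dz by (simp add: has_field_derivative_def mult_commute_abs)
    show "((\<lambda>w. f (z, w)) has_derivative blinfun_apply (blinfun_mult_left (Q (z, w)))) (at w)"
      if "(z, w) \<in> V" for z w
      using dw[OF that] by (simp add: has_field_derivative_def mult_commute_abs)
    show "continuous_on V (\<lambda>p. blinfun_mult_left (Q p))"
      using Q by (intro continuous_intros)
  qed
  then show ?thesis by (simp add: mult.commute)
qed

lemma has_derivative_from_partials3:
  fixes f :: "real \<times> real \<times> real \<Rightarrow> real"
  assumes U: "open U" "(x0, z0, w0) \<in> U"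
    and dx: "((\<lambda>x. f (x, z0, w0)) has_real_derivative P1) (at x0)"
    and dz: "\<And>x z w. (x, z, w) \<in> U \<Longrightarrow> ((\<lambda>z. f (x, z, w)) has_real_derivative P2 (x, z, w)) (at z)"
    and dw: "\<And>x z w. (x, z, w) \<in> U \<Longrightarrow> ((\<lambda>w. f (x, z, w)) has_real_derivative P3 (x, z, w)) (at w)"
    and P2: "continuous_on U P2" and P3: "continuous_on U P3"
  shows "(f has_derivative (\<lambda>(a, b, c). a * P1 + b * P2 (x0, z0, w0) + c * P3 (x0, z0, w0))) (at (x0, z0, w0))"
proof -
  define B where "B p = (blinfun_mult_left (P2 p) o\<^sub>L fst_blinfun) + (blinfun_mult_left (P3 p) o\<^sub>L snd_blinfun)" for p
  have B_apply: "blinfun_apply (B p) = (\<lambda>(b, c). b * P2 p + c * P3 p)" for p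
    by (auto simp: B_def blinfun.add_left mult.commute)
  have "(f has_derivative (\<lambda>(a, y). a * P1 + B (x0, z0, w0) y)) (at (x0, z0, w0))"
  proof (rule has_derivative_pair_partials[OF U])
    show "((\<lambda>x. f (x, z0, w0)) has_derivative (\<lambda>a. a * P1)) (at x0)"
      using dx by (simp add: has_field_derivative_def mult_commute_abs)
    show "((\<lambda>y. f (x, y)) has_derivative blinfun_apply (B (x, y))) (at y)"
      if "(x, y) \<in> U" for x y
    proof -
      obtain z w where y: "y = (z, w)" by (cases y)
      have "open {q. (x, q) \<in> U}"
        using U(1) by (rule open_vimage[of _ "Pair x", unfolded vimage_def]) (intro continuous_intros)
      moreover have "continuous_on {q. (x, q) \<in> U} (\<lambda>q. P3 (x, q))"
        by (rule continuous_on_compose2[OF P3 continuous_on_Pair[OF continuous_on_const continuous_on_id]]) auto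
      ultimately show ?thesis
        unfolding y B_apply using that dz dw y
        by (intro has_derivative_from_partials2) auto
    qed
    show "continuous_on U B"
      unfolding B_def using P2 P3 by (intro continuous_intros)
  qed
  then show ?thesis by (simp add: B_apply case_prod_beta' add.assoc)
qed

lemma C2_on_partials:
  assumes "C2_on S f"
  obtains U where "open U" "S \<subseteq> U"
    "\<And>v p. v \<in> Basis \<Longrightarrow> p \<in> U \<Longrightarrow> (\<lambda>t. f (p + t *\<^sub>R v)) differentiable (at 0)"
    "\<And>v. v \<in> Basis \<Longrightarrow> continuous_on U (pd f v)"
  using assms unfolding C2_on_def by metis

lemma C2_on_imp_continuous_on:
  fixes f :: "real \<times> real \<Rightarrow> real"
  assumes "C2_on S f"
  shows "continuous_on S f"
proof -
  obtain U where U: "open U" "S \<subseteq> U"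
    and diff: "\<And>v p. v \<in> Basis \<Longrightarrow> p \<in> U \<Longrightarrow> (\<lambda>t. f (p + t *\<^sub>R v)) differentiable (at 0)"
    and cont: "\<And>v. v \<in> Basis \<Longrightarrow> continuous_on U (pd f v)"
    using C2_on_partials[OF assms] by blast
  have B: "(1, 0) \<in> (Basis :: (real \<times> real) set)" "(0, 1) \<in> (Basis :: (real \<times> real) set)"
    by (auto simp: Basis_prod_def zero_prod_def)
  have "isCont f (z0, w0)" if "(z0, w0) \<in> U" for z0 w0
  proof -
    have "(f has_derivative (\<lambda>(a, b). a * pd f (1, 0) (z0, w0) + b * pd f (0, 1) (z0, w0))) (at (z0, w0))"
    proof (rule has_derivative_from_partials2[OF U(1) that])
      show "((\<lambda>z. f (z, w0)) has_real_derivative pd f (1, 0) (z0, w0)) (at z0)"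
        using has_real_derivative_pd[OF diff[OF B(1) that], of z0] by (simp add: zero_prod_def)
      show "((\<lambda>w. f (z, w)) has_real_derivative pd f (0, 1) (z, w)) (at w)" if "(z, w) \<in> U" for z w
        using has_real_derivative_pd[OF diff[OF B(2) that], of w] by (simp add: zero_prod_def)
    qed (use cont B in auto)
    then show ?thesis by (rule has_derivative_continuous)
  qed
  then show ?thesis
    using U by (metis continuous_at_imp_continuous_on subsetD surj_pair)
qed

lemma C2_on_le_Sup:
  fixes f :: "real \<times> real \<Rightarrow> real"
  assumes "C2_on S f" "compact S" "p \<in> S"
  shows "f p \<le> Sup (f ` S)"
  using assms
  by (intro cSup_upper imageI bounded_imp_bdd_above compact_imp_bounded
      compact_continuous_image C2_on_imp_continuous_on)

lemma C2_on_has_derivative3: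
  fixes f :: "real \<times> real \<times> real \<Rightarrow> real"
  assumes "C2_on S f"
  obtains U where "S \<subseteq> U"
    "\<And>p. p \<in> U \<Longrightarrow> (f has_derivative
       (\<lambda>(a, b, c). a * pd f (1, 0, 0) p + b * pd f (0, 1, 0) p + c * pd f (0, 0, 1) p)) (at p)"
proof -
  obtain U where U: "open U" "S \<subseteq> U"
    and diff: "\<And>v p. v \<in> Basis \<Longrightarrow> p \<in> U \<Longrightarrow> (\<lambda>t. f (p + t *\<^sub>R v)) differentiable (at 0)"
    and cont: "\<And>v. v \<in> Basis \<Longrightarrow> continuous_on U (pd f v)"
    using C2_on_partials[OF assms] by blast
  have B: "(1, 0, 0) \<in> (Basis :: (real \<times> real \<times> real) set)"
    "(0, 1, 0) \<in> (Basis :: (real \<times> real \<times> real) set)"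
    "(0, 0, 1) \<in> (Basis :: (real \<times> real \<times> real) set)"
    by (auto simp: Basis_prod_def zero_prod_def)
  have "(f has_derivative (\<lambda>(a, b, c). a * pd f (1, 0, 0) (x0, z0, w0)
      + b * pd f (0, 1, 0) (x0, z0, w0) + c * pd f (0, 0, 1) (x0, z0, w0))) (at (x0, z0, w0))"
    if "(x0, z0, w0) \<in> U" for x0 z0 w0
  proof (rule has_derivative_from_partials3[OF U(1) that])
    show "((\<lambda>x. f (x, z0, w0)) has_real_derivative pd f (1, 0, 0) (x0, z0, w0)) (at x0)"
      using has_real_derivative_pd[OF diff[OF B(1) that], of x0] by (simp add: zero_prod_def)
    show "((\<lambda>z. f (x, z, w)) has_real_derivative pd f (0, 1, 0) (x, z, w)) (at z)"
      if "(x, z, w) \<in> U" for x z w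
      using has_real_derivative_pd[OF diff[OF B(2) that], of z] by (simp add: zero_prod_def)
    show "((\<lambda>w. f (x, z, w)) has_real_derivative pd f (0, 0, 1) (x, z, w)) (at w)"
      if "(x, z, w) \<in> U" for x z w
      using has_real_derivative_pd[OF diff[OF B(3) that], of w] by (simp add: zero_prod_def)
  qed (use cont B in auto)
  then show ?thesis using U that by auto
qed

lemma grad_sq_chain:
  fixes g :: "real \<times> real \<times> real \<Rightarrow> real"
  assumes g: "(g has_derivative (\<lambda>(a, b, c). a * P1 + b * P2 + c * P3)) (at (x, c0 + k * z, u x))"
    and u: "(u has_real_derivative v) (at x)"
    and N: "open N" "(x, z) \<in> N" "\<And>q. q \<in> N \<Longrightarrow> F q = g (fst q, c0 + k * snd q, u (fst q))"
  shows "grad_sq F (x, z) = (P1 + v * P3)\<^sup>2 + (k * P2)\<^sup>2"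
proof -
  let ?\<psi> = "\<lambda>q::real \<times> real. (fst q, c0 + k * snd q, u (fst q))"
  have "(?\<psi> has_derivative (\<lambda>q. (fst q, k * snd q, fst q * v))) (at (x, z))"
    by (auto intro!: derivative_eq_intros DERIV_compose_FDERIV[where f = u] u)
  then have "((g \<circ> ?\<psi>) has_derivative
      (\<lambda>(a, b, c). a * P1 + b * P2 + c * P3) \<circ> (\<lambda>q. (fst q, k * snd q, fst q * v))) (at (x, z))"
    using g by (intro diff_chain_at) simp_all
  then have "(F has_derivative
      (\<lambda>(a, b, c). a * P1 + b * P2 + c * P3) \<circ> (\<lambda>q. (fst q, k * snd q, fst q * v))) (at (x, z))"
    by (rule has_derivative_transform_within_open[OF _ N(1,2)]) (simp add: N(3))
  from frechet_derivative_at[OF this, symmetric] show ?thesis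
    unfolding grad_sq_def by (simp add: algebra_simps)
qed

lemma grad_sq_h_delta_upper:
  assumes "(h has_derivative (\<lambda>(a, b, c). a * P1 + b * P2 + c * P3)) (at (x, z, u x))"
    and "(u has_real_derivative v) (at x)" and "-H < z"
  shows "grad_sq (\<lambda>q. h_delta H \<delta> hb h (fst q) (snd q) (u (fst q))) (x, z) = (P1 + v * P3)\<^sup>2 + P2\<^sup>2"
  using grad_sq_chain[of h P1 P2 P3 x 0 1 z u v "{q. -H < snd q}"] assms
  by (simp add: h_delta_def open_Collect_less continuous_on_snd)

lemma grad_sq_h_delta_lower:
  assumes "(hb has_derivative (\<lambda>(a, b, c). a * Q1 + b * Q2 + c * Q3)) (at (x, -H + (z + H) / \<delta>, u x))"
    and "(u has_real_derivative v) (at x)" and "z < -H" and "\<delta> \<noteq> 0"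
  shows "grad_sq (\<lambda>q. h_delta H \<delta> hb h (fst q) (snd q) (u (fst q))) (x, z) = (Q1 + v * Q3)\<^sup>2 + (Q2 / \<delta>)\<^sup>2"
proof -
  have affine: "-H + (y + H) / \<delta> = (H / \<delta> - H) + (1 / \<delta>) * y" for y
    using assms(4) by (simp add: field_simps)
  have "grad_sq (\<lambda>q. h_delta H \<delta> hb h (fst q) (snd q) (u (fst q))) (x, z)
      = (Q1 + v * Q3)\<^sup>2 + (1 / \<delta> * Q2)\<^sup>2"
  proof (rule grad_sq_chain[OF assms(1)[unfolded affine] assms(2)])
    show "open {q. snd q < -H}" by (simp add: open_Collect_less continuous_on_snd)
  qed (use assms(3) in \<open>simp_all add: h_delta_def add_divide_distrib algebra_simps\<close>)
  then show ?thesis by simp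
qed

lemma chain_sq_le:
  fixes P1 P2 P3 v A B :: real
  assumes P12: "\<bar>P1\<bar> + \<bar>P2\<bar> \<le> sqrt A" and P3: "\<bar>P3\<bar> \<le> sqrt B" and "0 \<le> A" "0 \<le> B"
  shows "(P1 + v * P3)\<^sup>2 + P2\<^sup>2 \<le> 2 * A + 2 * v\<^sup>2 * B"
proof -
  have "(\<bar>P1\<bar> + \<bar>P2\<bar>)\<^sup>2 \<le> A"
    using power_mono[OF P12, of 2] \<open>0 \<le> A\<close> by simp
  then have A: "P1\<^sup>2 + P2\<^sup>2 \<le> A"
    unfolding power2_sum power2_abs using mult_nonneg_nonneg[of "2 * \<bar>P1\<bar>" "\<bar>P2\<bar>"] by linarith
  have "P3\<^sup>2 \<le> B"
    using power_mono[OF P3, of 2] \<open>0 \<le> B\<close> by simp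
  then have B: "v\<^sup>2 * P3\<^sup>2 \<le> v\<^sup>2 * B"
    by (simp add: mult_left_mono)
  have "(P1 + v * P3)\<^sup>2 + (P1 - v * P3)\<^sup>2 = 2 * P1\<^sup>2 + 2 * (v\<^sup>2 * P3\<^sup>2)"
    by (simp add: power2_eq_square algebra_simps)
  then show ?thesis
    using A B zero_le_power2[of "P1 - v * P3"] zero_le_power2[of P2] by linarith
qed

lemma scaled_sq_le:
  fixes X Y \<delta> :: real
  assumes "0 < \<delta>" "\<delta> \<le> 1" "0 \<le> X"
  shows "\<delta> * (X + (Y / \<delta>)\<^sup>2) \<le> (X + Y\<^sup>2) / \<delta>"
proof -
  have "\<delta> * \<delta> * X \<le> X"
    using assms by (simp add: mult_le_one mult_left_le_one_le)
  then have "\<delta> * X \<le> X / \<delta>"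
    using divide_right_mono[of "\<delta> * \<delta> * X" X \<delta>] assms by simp
  have "\<delta> * (X + (Y / \<delta>)\<^sup>2) = \<delta> * X + Y\<^sup>2 / \<delta>"
    using assms by (simp add: field_simps power2_eq_square)
  also have "\<dots> \<le> X / \<delta> + Y\<^sup>2 / \<delta>"
    using \<open>\<delta> * X \<le> X / \<delta>\<close> by simp
  finally show ?thesis
    by (simp add: add_divide_distrib)
qed

lemma energy_density_upper:
  fixes m :: real
  assumes h: "(h has_derivative (\<lambda>(a, b, c). a * P1 + b * P2 + c * P3)) (at (x, z, u x))"
    and u: "(u has_real_derivative v) (at x)"
    and z: "-H < z" "z < u x"
    and P12: "\<bar>P1\<bar> + \<bar>P2\<bar> \<le> sqrt (m * (1 + (u x)\<^sup>2) / (H + u x))"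
    and P3: "\<bar>P3\<bar> \<le> sqrt (m / (H + u x))" and "0 \<le> m"
  shows "sigma_delta H \<delta> \<sigma> (x, z) * grad_sq (\<lambda>q. h_delta H \<delta> hb h (fst q) (snd q) (u (fst q))) (x, z)
    \<le> 2 * m * (1 + (u x)\<^sup>2 + v\<^sup>2) / (H + u x)"
proof -
  have "0 < H + u x" using z by simp
  then have "(P1 + v * P3)\<^sup>2 + P2\<^sup>2 \<le> 2 * (m * (1 + (u x)\<^sup>2) / (H + u x)) + 2 * v\<^sup>2 * (m / (H + u x))"
    using \<open>0 \<le> m\<close> by (intro chain_sq_le[OF P12 P3]) auto
  also have "\<dots> = 2 * m * (1 + (u x)\<^sup>2 + v\<^sup>2) / (H + u x)"
    by (simp add: add_divide_distrib algebra_simps)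
  finally show ?thesis
    using z by (simp add: sigma_delta_def grad_sq_h_delta_upper[OF h u])
qed

lemma energy_density_lower:
  fixes m :: real
  assumes hb: "(hb has_derivative (\<lambda>(a, b, c). a * Q1 + b * Q2 + c * Q3)) (at (x, -H + (z + H) / \<delta>, u x))"
    and u: "(u has_real_derivative v) (at x)"
    and "z < -H" "0 < \<delta>" "\<delta> \<le> 1"
    and \<sigma>: "0 \<le> \<sigma> (x, z)" "\<sigma> (x, z) \<le> S"
    and Q12: "\<bar>Q1\<bar> + \<bar>Q2\<bar> \<le> sqrt (m * (1 + (u x)\<^sup>2))"
    and Q3: "\<bar>Q3\<bar> \<le> sqrt m" and "0 \<le> m"
  shows "sigma_delta H \<delta> \<sigma> (x, z) * grad_sq (\<lambda>q. h_delta H \<delta> hb h (fst q) (snd q) (u (fst q))) (x, z)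
    \<le> 2 * m * S * (1 + (u x)\<^sup>2 + v\<^sup>2) / \<delta>"
proof -
  have "sigma_delta H \<delta> \<sigma> (x, z) * grad_sq (\<lambda>q. h_delta H \<delta> hb h (fst q) (snd q) (u (fst q))) (x, z)
      = \<sigma> (x, z) * (\<delta> * ((Q1 + v * Q3)\<^sup>2 + (Q2 / \<delta>)\<^sup>2))"
    using assms by (simp add: sigma_delta_def grad_sq_h_delta_lower[OF hb u])
  also have "\<dots> \<le> \<sigma> (x, z) * (((Q1 + v * Q3)\<^sup>2 + Q2\<^sup>2) / \<delta>)"
    using assms by (intro mult_left_mono scaled_sq_le) auto
  also have "\<dots> \<le> S * ((2 * (m * (1 + (u x)\<^sup>2)) + 2 * v\<^sup>2 * m) / \<delta>)"
    using assms by (intro mult_mono divide_right_mono chain_sq_le[OF Q12 Q3]) auto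
  also have "\<dots> = 2 * m * S * (1 + (u x)\<^sup>2 + v\<^sup>2) / \<delta>"
    by (simp add: algebra_simps)
  finally show ?thesis .
qed

lemma energy_density_le:
  fixes m S :: real
  assumes "0 \<le> m" and \<delta>: "0 < \<delta>" "\<delta> < 1"
    and x: "x \<in> {-L..L}" and z: "-H - \<delta> < z" "z < u x" "z \<noteq> -H"
    and u: "(u has_real_derivative v) (at x)" "-H \<le> u x"
    and \<sigma>: "\<And>p. p \<in> {-L..L} \<times> {-H-1..-H} \<Longrightarrow> 0 \<le> \<sigma> p \<and> \<sigma> p \<le> S"
    and h: "\<And>q. q \<in> {-L..L} \<times> {-H..} \<times> {-H..} \<Longrightarrow> (h has_derivative
       (\<lambda>(a, b, c). a * pd h (1, 0, 0) q + b * pd h (0, 1, 0) q + c * pd h (0, 0, 1) q)) (at q)"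
    and hb: "\<And>q. q \<in> {-L..L} \<times> {-H-1..-H} \<times> {-H..} \<Longrightarrow> (hb has_derivative
       (\<lambda>(a, b, c). a * pd hb (1, 0, 0) q + b * pd hb (0, 1, 0) q + c * pd hb (0, 0, 1) q)) (at q)"
    and h_bound: "\<forall>x\<in>{-L..L}. \<forall>z\<ge>-H. \<forall>w>-H.
        \<bar>pd h (1, 0, 0) (x, z, w)\<bar> + \<bar>pd h (0, 1, 0) (x, z, w)\<bar> \<le> sqrt (m * (1 + w\<^sup>2) / (H + w)) \<and>
        \<bar>pd h (0, 0, 1) (x, z, w)\<bar> \<le> sqrt (m / (H + w))"
    and hb_bound: "\<forall>x\<in>{-L..L}. \<forall>z\<in>{-H-1..-H}. \<forall>w\<ge>-H.
        \<bar>pd hb (1, 0, 0) (x, z, w)\<bar> + \<bar>pd hb (0, 1, 0) (x, z, w)\<bar> \<le> sqrt (m * (1 + w\<^sup>2)) \<and>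
        \<bar>pd hb (0, 0, 1) (x, z, w)\<bar> \<le> sqrt m"
  shows "sigma_delta H \<delta> \<sigma> (x, z) * grad_sq (\<lambda>q. h_delta H \<delta> hb h (fst q) (snd q) (u (fst q))) (x, z)
    \<le> 2 * m * (1 + S) * (1 + (u x)\<^sup>2 + v\<^sup>2) *
       (indicator {-H<..<u x} z / (H + u x) + indicator {-H-\<delta><..<-H} z / \<delta>)"
proof -
  have "0 \<le> S" using \<sigma>[of "(x, -H)"] x by auto
  then have m_le: "2 * m \<le> 2 * m * (1 + S)" "2 * m * S \<le> 2 * m * (1 + S)"
    using \<open>0 \<le> m\<close> by (simp_all add: algebra_simps)
  show ?thesis
  proof (cases "-H < z")
    case True
    then have "sigma_delta H \<delta> \<sigma> (x, z) * grad_sq (\<lambda>q. h_delta H \<delta> hb h (fst q) (snd q) (u (fst q))) (x, z)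
        \<le> 2 * m * (1 + (u x)\<^sup>2 + v\<^sup>2) / (H + u x)"
      using x z h_bound \<open>0 \<le> m\<close> by (intro energy_density_upper[OF h u(1)]) auto
    also have "\<dots> \<le> 2 * m * (1 + S) * (1 + (u x)\<^sup>2 + v\<^sup>2) / (H + u x)"
      using True z m_le by (intro divide_right_mono mult_right_mono) auto
    finally show ?thesis
      using True z by simp
  next
    case False
    then have "z < -H" using z(3) by simp
    have s: "-H + (z + H) / \<delta> \<in> {-H-1..-H}"
      using z(1) \<open>z < -H\<close> \<delta> by (auto simp: field_simps)
    have "sigma_delta H \<delta> \<sigma> (x, z) * grad_sq (\<lambda>q. h_delta H \<delta> hb h (fst q) (snd q) (u (fst q))) (x, z)
        \<le> 2 * m * S * (1 + (u x)\<^sup>2 + v\<^sup>2) / \<delta>"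
      using x s u(2) \<sigma>[of "(x, z)"] z(1) \<open>z < -H\<close> \<delta> hb_bound \<open>0 \<le> m\<close>
      by (intro energy_density_lower[OF hb u(1)]) auto
    also have "\<dots> \<le> 2 * m * (1 + S) * (1 + (u x)\<^sup>2 + v\<^sup>2) / \<delta>"
      using \<delta> m_le by (intro divide_right_mono mult_right_mono) auto
    finally show ?thesis
      using \<open>z < -H\<close> z(1) by simp
  qed
qed

lemma nn_integral_two_intervals:
  fixes K1 K2 a b c d :: real
  assumes "0 \<le> K1" "0 \<le> K2" "a \<le> b" "c \<le> d"
  shows "(\<integral>\<^sup>+z. ennreal (K1 * indicator {a<..<b} z + K2 * indicator {c<..<d} z) \<partial>lborel)
    = ennreal (K1 * (b - a) + K2 * (d - c))"
proof -
  have "ennreal (K1 * indicator {a<..<b} z + K2 * indicator {c<..<d} z)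
      = ennreal K1 * indicator {a<..<b} z + ennreal K2 * indicator {c<..<d} z" for z
    using assms by (simp add: indicator_def ennreal_plus)
  then have "(\<integral>\<^sup>+z. ennreal (K1 * indicator {a<..<b} z + K2 * indicator {c<..<d} z) \<partial>lborel)
      = (\<integral>\<^sup>+z. ennreal K1 * indicator {a<..<b} z \<partial>lborel)
        + (\<integral>\<^sup>+z. ennreal K2 * indicator {c<..<d} z \<partial>lborel)"
    by (simp add: nn_integral_add)
  also have "\<dots> = ennreal (K1 * (b - a)) + ennreal (K2 * (d - c))"
    using assms by (simp add: nn_integral_cmult_indicator ennreal_mult)
  also have "\<dots> = ennreal (K1 * (b - a) + K2 * (d - c))"
    using assms by (simp add: ennreal_plus)
  finally show ?thesis .
qed

lemma nn_integral_Icc_eq_integral: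
  fixes f :: "real \<Rightarrow> real"
  assumes "continuous_on UNIV f" "\<And>x. 0 \<le> f x"
  shows "(\<integral>\<^sup>+x. ennreal (indicator {a..b} x * f x) \<partial>lborel) = ennreal (integral {a..b} f)"
proof (rule nn_integral_has_integral_lborel)
  show "(\<lambda>x. indicator {a..b} x * f x) \<in> borel_measurable borel"
    using borel_measurable_continuous_onI[OF assms(1)] by measurable
  have "(f has_integral integral {a..b} f) {a..b}"
    using assms(1) by (auto intro: integrable_continuous_interval continuous_on_subset)
  then have "((\<lambda>x. if x \<in> {a..b} then f x else 0) has_integral integral {a..b} f) UNIV"
    by (simp only: has_integral_restrict_UNIV)
  then show "((\<lambda>x. indicator {a..b} x * f x) has_integral integral {a..b} f) UNIV"
    by (rule has_integral_eq[rotated]) (simp add: indicator_def)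
qed (use assms in simp)

lemma nn_integral_two_layers_le:
  fixes a t :: "real \<Rightarrow> real"
  assumes a: "continuous_on UNIV a" "\<And>x. 0 \<le> a x"
    and t: "continuous_on UNIV t" "\<And>x. x \<in> {l..r} \<Longrightarrow> b \<le> t x"
    and "0 < \<delta>"
  shows "(\<integral>\<^sup>+p. ennreal (indicator {l..r} (fst p) * a (fst p) *
      (indicator {b<..<t (fst p)} (snd p) / (t (fst p) - b) + indicator {b - \<delta><..<b} (snd p) / \<delta>)) \<partial>lborel)
    \<le> ennreal (2 * integral {l..r} a)"
    (is "(\<integral>\<^sup>+p. ennreal (?g p) \<partial>lborel) \<le> _")
  \<comment> \<open>Where t x = b the quotient has the junk value 0, which is harmless since the fibre is empty.\<close>
proof -
  have [measurable]: "a \<in> borel_measurable borel" "t \<in> borel_measurable borel"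
    using a t by (auto intro: borel_measurable_continuous_onI)
  have "?g = (\<lambda>p. (if l \<le> fst p \<and> fst p \<le> r then 1 else 0) * a (fst p) *
      ((if b < snd p \<and> snd p < t (fst p) then 1 else 0) / (t (fst p) - b)
       + (if b - \<delta> < snd p \<and> snd p < b then 1 else 0) / \<delta>))"
    by (simp add: indicator_def fun_eq_iff)
  also have "\<dots> \<in> borel_measurable (lborel \<Otimes>\<^sub>M lborel)"
    by measurable
  finally have "(\<lambda>p. ennreal (?g p)) \<in> borel_measurable (lborel \<Otimes>\<^sub>M lborel)"
    by (rule measurable_compose[OF _ measurable_ennreal])
  from lborel.nn_integral_fst[OF this]
  have "(\<integral>\<^sup>+p. ennreal (?g p) \<partial>lborel)
      = (\<integral>\<^sup>+x. \<integral>\<^sup>+z. ennreal (?g (x, z)) \<partial>lborel \<partial>lborel)"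
    by (simp add: lborel_prod)
  also have "\<dots> \<le> (\<integral>\<^sup>+x. ennreal (indicator {l..r} x * (2 * a x)) \<partial>lborel)"
  proof (intro nn_integral_mono)
    fix x
    show "(\<integral>\<^sup>+z. ennreal (?g (x, z)) \<partial>lborel) \<le> ennreal (indicator {l..r} x * (2 * a x))"
    proof (cases "x \<in> {l..r}")
      case True
      define K1 where "K1 = a x / (t x - b)"
      define K2 where "K2 = a x / \<delta>"
      have "?g (x, z) = K1 * indicator {b<..<t x} z + K2 * indicator {b - \<delta><..<b} z" for z
        using True by (simp add: K1_def K2_def indicator_def)
      then have "(\<integral>\<^sup>+z. ennreal (?g (x, z)) \<partial>lborel)
          = (\<integral>\<^sup>+z. ennreal (K1 * indicator {b<..<t x} z + K2 * indicator {b - \<delta><..<b} z) \<partial>lborel)"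
        by (simp only:)
      also have "\<dots> = ennreal (K1 * (t x - b) + K2 * (b - (b - \<delta>)))"
        using True t(2) a(2) \<open>0 < \<delta>\<close>
        by (intro nn_integral_two_intervals) (auto simp: K1_def K2_def)
      also have "\<dots> = ennreal (a x / (t x - b) * (t x - b) + a x / \<delta> * (b - (b - \<delta>)))"
        by (simp add: K1_def K2_def)
      also have "\<dots> \<le> ennreal (indicator {l..r} x * (2 * a x))"
        using True a(2) \<open>0 < \<delta>\<close> by (intro ennreal_leI) auto
      finally show ?thesis .
    next
      case False
      then show ?thesis by simp
    qed
  qed
  also have "\<dots> = ennreal (integral {l..r} (\<lambda>x. 2 * a x))"
    using a by (intro nn_integral_Icc_eq_integral continuous_on_mult_left) auto
  also have "\<dots> = ennreal (2 * integral {l..r} a)"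
    by simp
  finally show ?thesis .
qed

lemma null_sets_horizontal_line: "{p :: real \<times> real. snd p = c} \<in> null_sets lborel"
proof -
  have "{p :: real \<times> real. snd p = c} = UNIV \<times> {c}" by auto
  moreover have "emeasure (lborel \<Otimes>\<^sub>M lborel) (UNIV \<times> {c :: real}) = 0"
    by (subst lborel.emeasure_pair_measure_Times) auto
  ultimately show ?thesis
    by (auto simp: null_sets_def lborel_prod[symmetric])
qed

lemma abs_le_one_plus_square: "\<bar>y :: real\<bar> \<le> 1 + y\<^sup>2"
proof (cases "\<bar>y\<bar> \<le> 1")
  case False
  then have "\<bar>y\<bar> * 1 \<le> \<bar>y\<bar> * \<bar>y\<bar>"
    by (intro mult_left_mono) auto
  then show ?thesis by (simp add: power2_eq_square)
qed (use zero_le_power2[of y] in linarith)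

lemma S0bar_imp_C1:
  assumes "S0bar L H u"
  obtains u' where "\<And>x. x \<in> {-L..L} \<Longrightarrow> (u has_real_derivative u' x) (at x within {-L..L})"
    and "continuous_on {-L..L} u'" and "\<And>x. x \<in> {-L..L} \<Longrightarrow> -H \<le> u x"
proof -
  obtain u' g where du: "\<forall>x\<in>{-L..L}. (u has_real_derivative u' x) (at x within {-L..L})"
    and g: "g \<in> borel_measurable lborel" "set_integrable lborel {-L..L} (\<lambda>x. (g x)\<^sup>2)"
    and u': "\<forall>x\<in>{-L..L}. u' x = u' (-L) + (LBINT t=-L..x. g t)"
    and uH: "\<forall>x\<in>{-L..L}. -H \<le> u x"
    using assms unfolding S0bar_def by blast
  have "set_integrable lborel {-L..L} (\<lambda>x. 1 + (g x)\<^sup>2)"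
    by (rule set_integral_add(1)[OF borel_integrable_atLeastAtMost' g(2)]) simp
  then have g_int: "set_integrable lborel {-L..L} g"
    by (rule set_integrable_bound)
      (use g(1) abs_le_one_plus_square in \<open>auto simp: set_borel_measurable_def\<close>)
  have u'_eq: "u' x = u' (-L) + integral {-L..x} g" if "x \<in> {-L..L}" for x
  proof -
    have "set_integrable lborel {-L..x} g"
      using that by (rule_tac set_integrable_subset[OF g_int]) auto
    then have "(LBINT t=-L..x. g t) = integral {-L..x} g"
      using that by (simp add: interval_integral_Icc set_borel_integral_eq_integral(2))
    moreover have "u' x = u' (-L) + (LBINT t=-L..x. g t)"
      using u' that by blast
    ultimately show ?thesis by simp
  qed
  have "continuous_on {-L..L} (\<lambda>x. u' (-L) + integral {-L..x} g)"
    using set_borel_integral_eq_integral(1)[OF g_int]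
    by (intro continuous_on_add continuous_on_const indefinite_integral_continuous_1)
  then have "continuous_on {-L..L} u'"
    by (rule continuous_on_eq) (rule u'_eq[symmetric])
  then show ?thesis using that du uH by blast
qed

lemma continuous_on_Icc_extension:
  fixes f :: "real \<Rightarrow> real"
  assumes "continuous_on {a..b} f"
  obtains g where "continuous_on UNIV g" "\<And>x. x \<in> {a..b} \<Longrightarrow> g x = f x"
  using Tietze_unbounded[OF assms, of UNIV]
  by (metis closed_atLeastAtMost closedin_closed_eq closed_UNIV subset_UNIV)

lemma integral_Icc_continuous_extension_eq:
  fixes ue ve u :: "real \<Rightarrow> real"
  assumes ue: "continuous_on UNIV ue" "\<And>x. x \<in> {l..r} \<Longrightarrow> ue x = u x"
    and ve: "continuous_on UNIV ve" "\<And>x. x \<in> {l<..<r} \<Longrightarrow> ve x = deriv u x"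
    and "l \<le> r"
  shows "integral {l..r} (\<lambda>x. 1 + (ue x)\<^sup>2 + (ve x)\<^sup>2)
    = (r - l) + integral {l..r} (\<lambda>x. (u x)\<^sup>2) + integral {l..r} (\<lambda>x. (deriv u x)\<^sup>2)"
proof -
  have int: "(\<lambda>x. 1) integrable_on {l..r}" "(\<lambda>x. (ue x)\<^sup>2) integrable_on {l..r}"
    "(\<lambda>x. (ve x)\<^sup>2) integrable_on {l..r}"
    using ue(1) ve(1) by (auto intro!: integrable_continuous_interval continuous_intros
        intro: continuous_on_subset)
  have "integral {l..r} (\<lambda>x. 1 + (ue x)\<^sup>2 + (ve x)\<^sup>2)
      = integral {l..r} (\<lambda>x. 1) + integral {l..r} (\<lambda>x. (ue x)\<^sup>2) + integral {l..r} (\<lambda>x. (ve x)\<^sup>2)"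
    by (simp add: integral_add[OF integrable_add[OF int(1,2)] int(3)] integral_add[OF int(1,2)])
  also have "integral {l..r} (\<lambda>x. (ue x)\<^sup>2) = integral {l..r} (\<lambda>x. (u x)\<^sup>2)"
    using ue(2) by (intro integral_cong) simp
  also have "integral {l..r} (\<lambda>x. (ve x)\<^sup>2) = integral {l..r} (\<lambda>x. (deriv u x)\<^sup>2)"
    using ve(2) by (intro integral_spike[of "{l, r}"]) auto
  finally show ?thesis
    using \<open>l \<le> r\<close> by simp
qed

lemma integral_nonneg_real:
  fixes f :: "'a::euclidean_space \<Rightarrow> real"
  assumes "\<And>x. x \<in> S \<Longrightarrow> 0 \<le> f x"
  shows "0 \<le> integral S f"
  using assms by (cases "f integrable_on S") (auto intro: integral_nonneg simp: not_integrable_integral)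

lemma S0bar_continuous_extension:
  assumes "S0bar L H u"
  obtains ue ve where "continuous_on UNIV ue" "continuous_on UNIV ve"
    "\<And>x. x \<in> {-L..L} \<Longrightarrow> ue x = u x" "\<And>x. x \<in> {-L..L} \<Longrightarrow> -H \<le> u x"
    "\<And>x. x \<in> {-L<..<L} \<Longrightarrow> (u has_real_derivative ve x) (at x)"
proof -
  obtain u' where du: "\<And>x. x \<in> {-L..L} \<Longrightarrow> (u has_real_derivative u' x) (at x within {-L..L})"
    and u'_cont: "continuous_on {-L..L} u'" and uH: "\<And>x. x \<in> {-L..L} \<Longrightarrow> -H \<le> u x"
    using S0bar_imp_C1[OF assms] by metis
  obtain ue where ue: "continuous_on UNIV ue" "\<And>x. x \<in> {-L..L} \<Longrightarrow> ue x = u x"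
    using continuous_on_Icc_extension[OF DERIV_continuous_on[OF du]] by metis
  obtain ve where ve: "continuous_on UNIV ve" "\<And>x. x \<in> {-L..L} \<Longrightarrow> ve x = u' x"
    using continuous_on_Icc_extension[OF u'_cont] by metis
  have "(u has_real_derivative ve x) (at x)" if "x \<in> {-L<..<L}" for x
  proof -
    have "at x within {-L..L} = at x"
      using that by (intro at_within_interior) simp
    then show ?thesis
      using du[of x] ve(2)[of x] that by auto
  qed
  then show thesis
    using that ue ve(1) uH by blast
qed

lemma energy_integral_le:
  fixes m S :: real
  assumes "0 \<le> m" "0 \<le> S" and \<delta>: "0 < \<delta>" "\<delta> < 1"
    and \<sigma>: "\<And>p. p \<in> {-L..L} \<times> {-H-1..-H} \<Longrightarrow> 0 \<le> \<sigma> p \<and> \<sigma> p \<le> S"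
    and h: "C2_on ({-L..L} \<times> {-H..} \<times> {-H..}) h"
    and hb: "C2_on ({-L..L} \<times> {-H-1..-H} \<times> {-H..}) hb"
    and h_bound: "\<forall>x\<in>{-L..L}. \<forall>z\<ge>-H. \<forall>w>-H.
        \<bar>pd h (1, 0, 0) (x, z, w)\<bar> + \<bar>pd h (0, 1, 0) (x, z, w)\<bar> \<le> sqrt (m * (1 + w\<^sup>2) / (H + w)) \<and>
        \<bar>pd h (0, 0, 1) (x, z, w)\<bar> \<le> sqrt (m / (H + w))"
    and hb_bound: "\<forall>x\<in>{-L..L}. \<forall>z\<in>{-H-1..-H}. \<forall>w\<ge>-H.
        \<bar>pd hb (1, 0, 0) (x, z, w)\<bar> + \<bar>pd hb (0, 1, 0) (x, z, w)\<bar> \<le> sqrt (m * (1 + w\<^sup>2)) \<and>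
        \<bar>pd hb (0, 0, 1) (x, z, w)\<bar> \<le> sqrt m"
    and ue: "continuous_on UNIV ue" "\<And>x. x \<in> {-L..L} \<Longrightarrow> ue x = u x"
    and uH: "\<And>x. x \<in> {-L..L} \<Longrightarrow> -H \<le> u x"
    and ve: "continuous_on UNIV ve" "\<And>x. x \<in> {-L<..<L} \<Longrightarrow> (u has_real_derivative ve x) (at x)"
  shows "(\<integral>\<^sup>+ p. indicator (Omega_delta L H \<delta> u) p *
      ennreal (sigma_delta H \<delta> \<sigma> p * grad_sq (\<lambda>q. h_delta H \<delta> hb h (fst q) (snd q) (u (fst q))) p) \<partial>lborel)
    \<le> ennreal (2 * integral {-L..L} (\<lambda>x. 2 * m * (1 + S) * (1 + (ue x)\<^sup>2 + (ve x)\<^sup>2)))"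
proof -
  obtain Uh where Uh: "{-L..L} \<times> {-H..} \<times> {-H..} \<subseteq> Uh" "\<And>q. q \<in> Uh \<Longrightarrow> (h has_derivative
       (\<lambda>(a, b, c). a * pd h (1, 0, 0) q + b * pd h (0, 1, 0) q + c * pd h (0, 0, 1) q)) (at q)"
    using C2_on_has_derivative3[OF h] by metis
  obtain Ub where Ub: "{-L..L} \<times> {-H-1..-H} \<times> {-H..} \<subseteq> Ub" "\<And>q. q \<in> Ub \<Longrightarrow> (hb has_derivative
       (\<lambda>(a, b, c). a * pd hb (1, 0, 0) q + b * pd hb (0, 1, 0) q + c * pd hb (0, 0, 1) q)) (at q)"
    using C2_on_has_derivative3[OF hb] by metis
  define a where "a = (\<lambda>x. 2 * m * (1 + S) * (1 + (ue x)\<^sup>2 + (ve x)\<^sup>2))"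
  have a_nonneg: "0 \<le> a x" for x
    using \<open>0 \<le> m\<close> \<open>0 \<le> S\<close> by (simp add: a_def)
  have a_cont: "continuous_on UNIV a"
    unfolding a_def using ue(1) ve(1) by (intro continuous_intros)
  define g where "g p = indicator {-L..L} (fst p) * a (fst p) *
    (indicator {-H<..<ue (fst p)} (snd p) / (ue (fst p) - -H) + indicator {-H - \<delta><..<-H} (snd p) / \<delta>)" for p
  have "indicator (Omega_delta L H \<delta> u) p *
      ennreal (sigma_delta H \<delta> \<sigma> p * grad_sq (\<lambda>q. h_delta H \<delta> hb h (fst q) (snd q) (u (fst q))) p)
    \<le> ennreal (g p)" if "snd p \<noteq> -H" for p
  proof (cases "p \<in> Omega_delta L H \<delta> u")
    case True
    obtain x z where p: "p = (x, z)" by (cases p)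
    with True that have x: "x \<in> {-L<..<L}" and z: "-H - \<delta> < z" "z < u x" "z \<noteq> -H"
      by (auto simp: Omega_delta_def)
    have "sigma_delta H \<delta> \<sigma> (x, z) * grad_sq (\<lambda>q. h_delta H \<delta> hb h (fst q) (snd q) (u (fst q))) (x, z)
        \<le> 2 * m * (1 + S) * (1 + (u x)\<^sup>2 + (ve x)\<^sup>2) *
           (indicator {-H<..<u x} z / (H + u x) + indicator {-H-\<delta><..<-H} z / \<delta>)"
      using x uH[of x]
      by (intro energy_density_le[OF \<open>0 \<le> m\<close> \<delta> _ z ve(2) _ \<sigma>
            Uh(2)[OF subsetD[OF Uh(1)]] Ub(2)[OF subsetD[OF Ub(1)]] h_bound hb_bound]) auto
    then show ?thesis
      using True x ue(2)[of x] by (simp add: p g_def a_def add.commute[of H] ennreal_leI)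
  qed simp
  then have "AE p in lborel. indicator (Omega_delta L H \<delta> u) p *
      ennreal (sigma_delta H \<delta> \<sigma> p * grad_sq (\<lambda>q. h_delta H \<delta> hb h (fst q) (snd q) (u (fst q))) p)
    \<le> ennreal (g p)"
    by (intro AE_I'[OF null_sets_horizontal_line[of "-H"]]) auto
  then have "(\<integral>\<^sup>+ p. indicator (Omega_delta L H \<delta> u) p *
      ennreal (sigma_delta H \<delta> \<sigma> p * grad_sq (\<lambda>q. h_delta H \<delta> hb h (fst q) (snd q) (u (fst q))) p) \<partial>lborel)
    \<le> (\<integral>\<^sup>+ p. ennreal (g p) \<partial>lborel)"
    by (rule nn_integral_mono_AE)
  also have "\<dots> \<le> ennreal (2 * integral {-L..L} a)"
    unfolding g_def using uH ue(2) \<delta>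
    by (intro nn_integral_two_layers_le[OF a_cont a_nonneg ue(1)]) auto
  finally show ?thesis
    by (simp only: a_def)
qed

lemma energy_bound:
  fixes m S :: real
  assumes "0 \<le> m" "0 < L" and \<delta>: "0 < \<delta>" "\<delta> < 1"
    and \<sigma>: "\<And>p. p \<in> {-L..L} \<times> {-H-1..-H} \<Longrightarrow> 0 \<le> \<sigma> p \<and> \<sigma> p \<le> S"
    and h: "C2_on ({-L..L} \<times> {-H..} \<times> {-H..}) h"
    and hb: "C2_on ({-L..L} \<times> {-H-1..-H} \<times> {-H..}) hb"
    and h_bound: "\<forall>x\<in>{-L..L}. \<forall>z\<ge>-H. \<forall>w>-H.
        \<bar>pd h (1, 0, 0) (x, z, w)\<bar> + \<bar>pd h (0, 1, 0) (x, z, w)\<bar> \<le> sqrt (m * (1 + w\<^sup>2) / (H + w)) \<and>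
        \<bar>pd h (0, 0, 1) (x, z, w)\<bar> \<le> sqrt (m / (H + w))"
    and hb_bound: "\<forall>x\<in>{-L..L}. \<forall>z\<in>{-H-1..-H}. \<forall>w\<ge>-H.
        \<bar>pd hb (1, 0, 0) (x, z, w)\<bar> + \<bar>pd hb (0, 1, 0) (x, z, w)\<bar> \<le> sqrt (m * (1 + w\<^sup>2)) \<and>
        \<bar>pd hb (0, 0, 1) (x, z, w)\<bar> \<le> sqrt m"
    and u: "S0bar L H u"
  shows "(\<integral>\<^sup>+ p. indicator (Omega_delta L H \<delta> u) p *
      ennreal (sigma_delta H \<delta> \<sigma> p * grad_sq (\<lambda>q. h_delta H \<delta> hb h (fst q) (snd q) (u (fst q))) p) \<partial>lborel)
    \<le> ennreal (4 * m * (1 + S) * (2 * L + 1) *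
         (1 + integral {-L..L} (\<lambda>x. (u x)\<^sup>2) + integral {-L..L} (\<lambda>x. (deriv u x)\<^sup>2)))"
proof -
  have "(L, -H) \<in> {-L..L} \<times> {-H-1..-H}"
    using \<open>0 < L\<close> by simp
  then have "0 \<le> S"
    using \<sigma> by fastforce
  obtain ue ve where ue: "continuous_on UNIV ue" "\<And>x. x \<in> {-L..L} \<Longrightarrow> ue x = u x"
    and ve: "continuous_on UNIV ve" and uH: "\<And>x. x \<in> {-L..L} \<Longrightarrow> -H \<le> u x"
    and du: "\<And>x. x \<in> {-L<..<L} \<Longrightarrow> (u has_real_derivative ve x) (at x)"
    using S0bar_continuous_extension[OF u] by metis
  define X where "X = integral {-L..L} (\<lambda>x. (u x)\<^sup>2) + integral {-L..L} (\<lambda>x. (deriv u x)\<^sup>2)"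
  have "0 \<le> X"
    unfolding X_def by (intro add_nonneg_nonneg integral_nonneg_real) auto
  then have "2 * L + X \<le> (2 * L + 1) * (1 + X)"
    using mult_nonneg_nonneg[of L X] \<open>0 < L\<close> by (simp add: algebra_simps)
  moreover have "integral {-L..L} (\<lambda>x. 1 + (ue x)\<^sup>2 + (ve x)\<^sup>2) = 2 * L + X"
    unfolding X_def using ue ve du \<open>0 < L\<close>
    by (subst integral_Icc_continuous_extension_eq[where u = u]) (auto intro: DERIV_imp_deriv[OF du, symmetric])
  ultimately have "2 * integral {-L..L} (\<lambda>x. 2 * m * (1 + S) * (1 + (ue x)\<^sup>2 + (ve x)\<^sup>2))
      \<le> 4 * m * (1 + S) * (2 * L + 1) * (1 + X)"
    using \<open>0 \<le> m\<close> \<open>0 \<le> S\<close> mult_left_mono[of _ _ "4 * m * (1 + S)"] by simp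
  then show ?thesis
    unfolding X_def add.assoc[symmetric]
    by (intro order_trans[OF energy_integral_le[OF \<open>0 \<le> m\<close> \<open>0 \<le> S\<close> \<delta> \<sigma> h hb h_bound hb_bound
          ue uH ve du] ennreal_leI])
qed

theorem lemma3p1:
  fixes m L smax :: real
  assumes "m > 0" and "L > 0"
  shows "\<exists>c0 > 0. \<forall>(H::real) (\<sigma>::real \<times> real \<Rightarrow> real)
            (hb::real \<times> real \<times> real \<Rightarrow> real) (h::real \<times> real \<times> real \<Rightarrow> real) (K::real)
            (u::real \<Rightarrow> real) (\<delta>::real).
     H > 0 \<longrightarrow>
     C2_on ({-L..L} \<times> {-H-1..-H}) \<sigma> \<longrightarrow>
     (\<forall>p\<in>{-L..L} \<times> {-H-1..-H}. \<sigma> p > 0) \<longrightarrow>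
     smax = 1 + Sup (\<sigma> ` ({-L..L} \<times> {-H-1..-H})) \<longrightarrow>
     C2_on ({-L..L} \<times> {-H-1..-H} \<times> {-H..}) hb \<longrightarrow>
     C2_on ({-L..L} \<times> {-H..} \<times> {-H..}) h \<longrightarrow>
     (\<forall>x\<in>{-L..L}. \<forall>w\<ge>-H. hb (x, -H, w) = h (x, -H, w)) \<longrightarrow>
     (\<forall>x\<in>{-L..L}. \<forall>w\<ge>-H. \<sigma> (x, -H) * pd hb (0, 1, 0) (x, -H, w) = pd h (0, 1, 0) (x, -H, w)) \<longrightarrow>
     (\<forall>x\<in>{-L..L}. \<forall>w\<ge>-H. pd hb (0, 0, 1) (x, -H-1, w) = 0) \<longrightarrow>
     (\<forall>x\<in>{-L..L}. \<forall>z\<in>{-H-1..-H}. \<forall>w\<ge>-H.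
        \<bar>pd hb (1, 0, 0) (x, z, w)\<bar> + \<bar>pd hb (0, 1, 0) (x, z, w)\<bar> \<le> sqrt (m * (1 + w\<^sup>2)) \<and>
        \<bar>pd hb (0, 0, 1) (x, z, w)\<bar> \<le> sqrt m) \<longrightarrow>
     (\<forall>x\<in>{-L..L}. \<forall>z\<ge>-H. \<forall>w>-H.
        \<bar>pd h (1, 0, 0) (x, z, w)\<bar> + \<bar>pd h (0, 1, 0) (x, z, w)\<bar> \<le> sqrt (m * (1 + w\<^sup>2) / (H + w)) \<and>
        \<bar>pd h (0, 0, 1) (x, z, w)\<bar> \<le> sqrt (m / (H + w))) \<longrightarrow>
     K > 0 \<longrightarrow>
     (\<forall>x\<in>{-L..L}. \<forall>w\<ge>-H.
        \<bar>pd h (1, 0, 0) (x, w, w)\<bar> + \<bar>pd h (0, 1, 0) (x, w, w) + pd h (0, 0, 1) (x, w, w)\<bar> \<le> K) \<longrightarrow>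
     S0bar L H u \<longrightarrow>
     0 < \<delta> \<longrightarrow> \<delta> < 1 \<longrightarrow>
     (\<integral>\<^sup>+ p. indicator (Omega_delta L H \<delta> u) p *
          ennreal (sigma_delta H \<delta> \<sigma> p *
                   grad_sq (\<lambda>q. h_delta H \<delta> hb h (fst q) (snd q) (u (fst q))) p) \<partial>lborel)
       \<le> ennreal (c0 * (1 + integral {-L..L} (\<lambda>x. (u x)\<^sup>2)
                          + integral {-L..L} (\<lambda>x. (deriv u x)\<^sup>2)))"
proof -
  define c0 where "c0 = 4 * m * (1 + \<bar>smax - 1\<bar>) * (2 * L + 1)"
  have "0 < c0" using assms by (simp add: c0_def add_pos_nonneg)
  show ?thesis
  proof (intro exI[of _ c0] conjI allI impI \<open>0 < c0\<close>)
    fix H K \<delta> :: real and \<sigma> :: "real \<times> real \<Rightarrow> real" and hb h :: "real \<times> real \<times> real \<Rightarrow> real"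
      and u :: "real \<Rightarrow> real"
    assume "H > 0" and \<sigma>_C2: "C2_on ({-L..L} \<times> {-H-1..-H}) \<sigma>"
      and \<sigma>_pos: "\<forall>p\<in>{-L..L} \<times> {-H-1..-H}. \<sigma> p > 0"
      and smax: "smax = 1 + Sup (\<sigma> ` ({-L..L} \<times> {-H-1..-H}))"
      and hb: "C2_on ({-L..L} \<times> {-H-1..-H} \<times> {-H..}) hb" and h: "C2_on ({-L..L} \<times> {-H..} \<times> {-H..}) h"
      and "\<forall>x\<in>{-L..L}. \<forall>w\<ge>-H. hb (x, -H, w) = h (x, -H, w)"
      and "\<forall>x\<in>{-L..L}. \<forall>w\<ge>-H. \<sigma> (x, -H) * pd hb (0, 1, 0) (x, -H, w) = pd h (0, 1, 0) (x, -H, w)"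
      and "\<forall>x\<in>{-L..L}. \<forall>w\<ge>-H. pd hb (0, 0, 1) (x, -H-1, w) = 0"
      and hb_bound: "\<forall>x\<in>{-L..L}. \<forall>z\<in>{-H-1..-H}. \<forall>w\<ge>-H.
        \<bar>pd hb (1, 0, 0) (x, z, w)\<bar> + \<bar>pd hb (0, 1, 0) (x, z, w)\<bar> \<le> sqrt (m * (1 + w\<^sup>2)) \<and>
        \<bar>pd hb (0, 0, 1) (x, z, w)\<bar> \<le> sqrt m"
      and h_bound: "\<forall>x\<in>{-L..L}. \<forall>z\<ge>-H. \<forall>w>-H.
        \<bar>pd h (1, 0, 0) (x, z, w)\<bar> + \<bar>pd h (0, 1, 0) (x, z, w)\<bar> \<le> sqrt (m * (1 + w\<^sup>2) / (H + w)) \<and>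
        \<bar>pd h (0, 0, 1) (x, z, w)\<bar> \<le> sqrt (m / (H + w))"
      and "K > 0"
      and "\<forall>x\<in>{-L..L}. \<forall>w\<ge>-H.
        \<bar>pd h (1, 0, 0) (x, w, w)\<bar> + \<bar>pd h (0, 1, 0) (x, w, w) + pd h (0, 0, 1) (x, w, w)\<bar> \<le> K"
      and u: "S0bar L H u" and \<delta>: "0 < \<delta>" "\<delta> < 1"
    have \<sigma>: "0 \<le> \<sigma> p \<and> \<sigma> p \<le> smax - 1" if "p \<in> {-L..L} \<times> {-H-1..-H}" for p
    proof -
      have "\<sigma> p \<le> Sup (\<sigma> ` ({-L..L} \<times> {-H-1..-H}))"
        using that by (intro C2_on_le_Sup[OF \<sigma>_C2] compact_Times compact_Icc)
      moreover have "0 < \<sigma> p"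
        using \<sigma>_pos that by blast
      ultimately show ?thesis
        using smax by linarith
    qed
    have "(L, -H) \<in> {-L..L} \<times> {-H-1..-H}"
      using \<open>L > 0\<close> by simp
    then have "c0 = 4 * m * (1 + (smax - 1)) * (2 * L + 1)"
      using \<sigma> by (force simp: c0_def)
    then show "(\<integral>\<^sup>+ p. indicator (Omega_delta L H \<delta> u) p *
          ennreal (sigma_delta H \<delta> \<sigma> p *
                   grad_sq (\<lambda>q. h_delta H \<delta> hb h (fst q) (snd q) (u (fst q))) p) \<partial>lborel)
       \<le> ennreal (c0 * (1 + integral {-L..L} (\<lambda>x. (u x)\<^sup>2)
                          + integral {-L..L} (\<lambda>x. (deriv u x)\<^sup>2)))"
      using energy_bound[where \<sigma> = \<sigma> and S = "smax - 1",
          OF _ \<open>L > 0\<close> \<delta> \<sigma> h hb h_bound hb_bound u] \<open>m > 0\<close>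
      by simp
  qed
qed

end
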